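(* Let $X$ be a connected graph that is either a tree or a unicyclic graph whose unique cycle has odd length, and let $\{a,b\},\{\alpha,\beta\}\in E(X)$. Then perfect state transfer occurs between $\mathbf e_a+\mathbf e_b$ and $\mathbf e_\alpha+\mathbf e_\beta$ in $X$ with Hamiltonian $Q$ if and only if perfect state transfer occurs between the vertex states $\mathbf f_{ab}$ and $\mathbf f_{\alpha\beta}$ in the line graph $\mathcal L(X)$ with adjacency Hamiltonian.
   Context: $Q=D+A$ is the signless Laplacian. The line graph $\mathcal L(X)$ has vertex set $E(X)$, edges adjacent iff they share an endpoint; $\mathbf f_{ab}$ is the vertex state of the vertex of $\mathcal L(X)$ corresponding to $\{a,b\}$. Perfect state transfer from $\mathbf u$ to $\boldsymbol\mu$ with Hamiltonian $M$: $e^{-\mathrm{i}\tau M}\mathbf u=\eta\boldsymbol\mu$ for some $\tau>0$, $|\eta|=1$. *)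

theory Defs
  imports Complex_Main
begin

definition simple_graph :: "'v set \<Rightarrow> 'v set set \<Rightarrow> bool" where
  "simple_graph V E \<longleftrightarrow> finite V \<and> (\<forall>e\<in>E. e \<subseteq> V \<and> card e = 2)"

definition adj :: "'v set set \<Rightarrow> 'v \<Rightarrow> 'v \<Rightarrow> bool" where
  "adj E x y \<longleftrightarrow> {x, y} \<in> E"

definition connected_graph :: "'v set \<Rightarrow> 'v set set \<Rightarrow> bool" where
  "connected_graph V E \<longleftrightarrow> V \<noteq> {} \<and> (\<forall>x\<in>V. \<forall>y\<in>V. (adj E)\<^sup>*\<^sup>* x y)"

definition is_cycle :: "'v set set \<Rightarrow> 'v list \<Rightarrow> bool" where
  "is_cycle E vs \<longleftrightarrow> length vs \<ge> 3 \<and> distinct vs \<and>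
     (\<forall>i < length vs. {vs ! i, vs ! ((i + 1) mod length vs)} \<in> E)"

definition cycle_edges :: "'v list \<Rightarrow> 'v set set" where
  "cycle_edges vs = {{vs ! i, vs ! ((i + 1) mod length vs)} | i. i < length vs}"

definition is_tree :: "'v set \<Rightarrow> 'v set set \<Rightarrow> bool" where
  "is_tree V E \<longleftrightarrow> connected_graph V E \<and> \<not> (\<exists>vs. is_cycle E vs)"

definition odd_unicyclic :: "'v set \<Rightarrow> 'v set set \<Rightarrow> bool" where
  "odd_unicyclic V E \<longleftrightarrow> connected_graph V E \<and>
     (\<exists>C. (\<exists>vs. is_cycle E vs \<and> cycle_edges vs = C) \<and>
          (\<forall>vs. is_cycle E vs \<longrightarrow> cycle_edges vs = C) \<and> odd (card C))"

definition mmult :: "'a set \<Rightarrow> ('a \<Rightarrow> 'a \<Rightarrow> complex) \<Rightarrow> ('a \<Rightarrow> 'a \<Rightarrow> complex) \<Rightarrow> ('a \<Rightarrow> 'a \<Rightarrow> complex)" where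
  "mmult W M N = (\<lambda>i j. \<Sum>k\<in>W. M i k * N k j)"

primrec mpow :: "'a set \<Rightarrow> ('a \<Rightarrow> 'a \<Rightarrow> complex) \<Rightarrow> nat \<Rightarrow> ('a \<Rightarrow> 'a \<Rightarrow> complex)" where
  "mpow W M 0 = (\<lambda>i j. if i = j then 1 else 0)"
| "mpow W M (Suc n) = mmult W M (mpow W M n)"

definition mexp :: "'a set \<Rightarrow> ('a \<Rightarrow> 'a \<Rightarrow> complex) \<Rightarrow> ('a \<Rightarrow> 'a \<Rightarrow> complex)" where
  "mexp W M = (\<lambda>i j. \<Sum>n. mpow W M n i j / of_nat (fact n))"

definition evol :: "'a set \<Rightarrow> ('a \<Rightarrow> 'a \<Rightarrow> complex) \<Rightarrow> real \<Rightarrow> ('a \<Rightarrow> 'a \<Rightarrow> complex)" where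
  "evol W M t = mexp W (\<lambda>i j. - \<i> * of_real t * M i j)"

definition PST :: "'a set \<Rightarrow> ('a \<Rightarrow> 'a \<Rightarrow> complex) \<Rightarrow> ('a \<Rightarrow> complex) \<Rightarrow> ('a \<Rightarrow> complex) \<Rightarrow> bool" where
  "PST W M u \<mu> \<longleftrightarrow> (\<exists>\<tau>::real. \<tau> > 0 \<and> (\<exists>\<eta>. cmod \<eta> = 1 \<and>
      (\<forall>i\<in>W. (\<Sum>j\<in>W. evol W M \<tau> i j * u j) = \<eta> * \<mu> i)))"

definition degree :: "'v set set \<Rightarrow> 'v \<Rightarrow> nat" where
  "degree E x = card {e \<in> E. x \<in> e}"

definition signless_laplacian :: "'v set set \<Rightarrow> 'v \<Rightarrow> 'v \<Rightarrow> complex" where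
  "signless_laplacian E i j =
     (if i = j then of_nat (degree E i) else if {i, j} \<in> E then 1 else 0)"

definition line_graph_adj :: "'v set set \<Rightarrow> 'v set \<Rightarrow> 'v set \<Rightarrow> complex" where
  "line_graph_adj E e f = (if e \<noteq> f \<and> e \<inter> f \<noteq> {} then 1 else 0)"

definition basis_vec :: "'a \<Rightarrow> 'a \<Rightarrow> complex" where
  "basis_vec a = (\<lambda>i. if i = a then 1 else 0)"

end

theory Submission
  imports Defs
begin

text \<open>Let \<open>N\<close> be the vertex-edge incidence matrix of \<open>X\<close> and \<open>A\<close> the adjacency matrix of
  its line graph. Then \<open>Q = N N\<^sup>T\<close> and \<open>N\<^sup>T N = A + 2 I\<close>, so \<open>Q N = N (A + 2 I)\<close> and hence
  \<open>exp (-itQ) N = exp (-2it) N exp (-itA)\<close>. Since \<open>e\<^sub>a + e\<^sub>b = N f\<^sub>a\<^sub>b\<close>, perfect state transfer in \<open>X\<close>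
  at time \<open>t\<close> with phase \<open>\<eta>\<close> means \<open>N (exp (-2it) exp (-itA) f\<^sub>a\<^sub>b - \<eta> f\<^sub>\<alpha>\<^sub>\<beta>) = 0\<close>, which is
  equivalent to perfect state transfer in the line graph as soon as \<open>N\<close> is injective.
  A nonzero vector in the kernel of \<open>N\<close> is supported on an edge set in which no vertex has degree
  one. Through each of its edges runs a path that closes a cycle at both ends, so the edge set is
  empty in a tree and lies on the unique cycle of a unicyclic graph. Along an odd cycle the kernel
  condition forces the weights to alternate in sign, which is only possible if they vanish.\<close>

section \<open>Matrix exponential\<close>

lemma mpow_norm_le:
  assumes "finite W" "i \<in> W"
  shows "norm (mpow W M n i j) \<le> (\<Sum>k\<in>W. \<Sum>l\<in>W. norm (M k l)) ^ n"
  using assms(2)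
proof (induction n arbitrary: i)
  case 0
  then show ?case by simp
next
  case (Suc n)
  define K where "K = (\<Sum>k\<in>W. \<Sum>l\<in>W. norm (M k l))"
  have "norm (mpow W M (Suc n) i j) \<le> (\<Sum>k\<in>W. norm (M i k) * norm (mpow W M n k j))"
    unfolding mpow.simps mmult_def by (rule order_trans[OF norm_sum]) (simp add: norm_mult)
  also have "\<dots> \<le> (\<Sum>k\<in>W. norm (M i k)) * K ^ n"
    unfolding sum_distrib_right
    by (rule sum_mono, rule mult_left_mono) (use Suc.IH in \<open>auto simp: K_def\<close>)
  also have "\<dots> \<le> K * K ^ n"
    unfolding K_def using assms(1) Suc.prems
    by (intro mult_right_mono member_le_sum[where f = "\<lambda>i. \<Sum>k\<in>W. norm (M i k)"])
       (auto simp: sum_nonneg)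
  finally show ?case by (simp add: K_def)
qed

lemma summable_norm_mexp_series:
  assumes "finite W" "i \<in> W"
  shows "summable (\<lambda>n. norm (mpow W M n i j / of_nat (fact n)))"
proof (rule summable_comparison_test)
  let ?K = "\<Sum>k\<in>W. \<Sum>l\<in>W. norm (M k l)"
  show "summable (\<lambda>n. ?K ^ n /\<^sub>R fact n)"
    by (rule summable_exp_generic)
  show "\<exists>N. \<forall>n\<ge>N. norm (norm (mpow W M n i j / of_nat (fact n))) \<le> ?K ^ n /\<^sub>R fact n"
    using mpow_norm_le[OF assms]
    by (auto simp: norm_divide divide_right_mono simp flip: divide_inverse_commute)
qed

lemma summable_mexp_series:
  assumes "finite W" "i \<in> W"
  shows "summable (\<lambda>n. mpow W M n i j / of_nat (fact n))"
  using summable_norm_cancel[OF summable_norm_mexp_series[OF assms]] .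

lemma mpow_intertwine:
  fixes N :: "'a \<Rightarrow> 'b \<Rightarrow> complex"
  assumes "finite V" "finite E"
    and intertw: "\<And>i f. i \<in> V \<Longrightarrow> f \<in> E \<Longrightarrow> (\<Sum>k\<in>V. P i k * N k f) = (\<Sum>g\<in>E. N i g * R g f)"
    and "i \<in> V" "e \<in> E"
  shows "(\<Sum>j\<in>V. mpow V P n i j * N j e) = (\<Sum>f\<in>E. N i f * mpow E R n f e)"
  using \<open>i \<in> V\<close>
proof (induction n arbitrary: i)
  case 0
  then show ?case
    using assms(1,2,5) by (simp add: sum.delta' sum.delta if_distrib[where f = "\<lambda>x. x * _"]
        if_distrib[where f = "\<lambda>x. _ * x"] cong: if_cong)
next
  case (Suc n)
  have "(\<Sum>j\<in>V. mpow V P (Suc n) i j * N j e) = (\<Sum>k\<in>V. P i k * (\<Sum>j\<in>V. mpow V P n k j * N j e))"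
    by (simp add: mmult_def sum_distrib_left sum_distrib_right mult.assoc) (rule sum.swap)
  also have "\<dots> = (\<Sum>k\<in>V. P i k * (\<Sum>f\<in>E. N k f * mpow E R n f e))"
    using Suc.IH by simp
  also have "\<dots> = (\<Sum>f\<in>E. (\<Sum>k\<in>V. P i k * N k f) * mpow E R n f e)"
    by (simp add: sum_distrib_left sum_distrib_right mult.assoc) (rule sum.swap)
  also have "\<dots> = (\<Sum>f\<in>E. (\<Sum>g\<in>E. N i g * R g f) * mpow E R n f e)"
    using intertw[OF Suc.prems] by simp
  also have "\<dots> = (\<Sum>f\<in>E. N i f * mpow E R (Suc n) f e)"
    by (simp add: mmult_def sum_distrib_left sum_distrib_right mult.assoc) (rule sum.swap)
  finally show ?case .
qed

lemma mexp_intertwine: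
  fixes N :: "'a \<Rightarrow> 'b \<Rightarrow> complex"
  assumes fin: "finite V" "finite E"
    and intertw: "\<And>i f. i \<in> V \<Longrightarrow> f \<in> E \<Longrightarrow> (\<Sum>k\<in>V. P i k * N k f) = (\<Sum>g\<in>E. N i g * R g f)"
    and i: "i \<in> V" and e: "e \<in> E"
  shows "(\<Sum>j\<in>V. mexp V P i j * N j e) = (\<Sum>f\<in>E. N i f * mexp E R f e)"
proof -
  have "(\<Sum>j\<in>V. mexp V P i j * N j e) = (\<Sum>j\<in>V. \<Sum>n. mpow V P n i j / of_nat (fact n) * N j e)"
    unfolding mexp_def by (intro sum.cong refl suminf_mult2 summable_mexp_series[OF fin(1) i])
  also have "\<dots> = (\<Sum>n. \<Sum>j\<in>V. mpow V P n i j / of_nat (fact n) * N j e)"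
    by (intro suminf_sum[symmetric] summable_mult2 summable_mexp_series[OF fin(1) i])
  also have "\<dots> = (\<Sum>n. \<Sum>f\<in>E. N i f * (mpow E R n f e / of_nat (fact n)))"
    by (simp add: mpow_intertwine[OF fin intertw i e] sum_divide_distrib[symmetric]
        times_divide_eq_left flip: sum_distrib_right)
  also have "\<dots> = (\<Sum>f\<in>E. \<Sum>n. N i f * (mpow E R n f e / of_nat (fact n)))"
    by (intro suminf_sum summable_mult summable_mexp_series[OF fin(2)]) simp
  also have "\<dots> = (\<Sum>f\<in>E. N i f * mexp E R f e)"
    unfolding mexp_def by (intro sum.cong refl suminf_mult summable_mexp_series[OF fin(2)])
  finally show ?thesis .
qed

lemma binomial_sum_Suc:
  fixes p :: "nat \<Rightarrow> complex" and d :: complex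
  shows "(\<Sum>l\<le>n. of_nat (n choose l) * d ^ (n - l) * p (Suc l))
           + d * (\<Sum>l\<le>n. of_nat (n choose l) * d ^ (n - l) * p l)
       = (\<Sum>l\<le>Suc n. of_nat (Suc n choose l) * d ^ (Suc n - l) * p l)"
proof -
  have "d * (\<Sum>l\<le>n. of_nat (n choose l) * d ^ (n - l) * p l)
      = (\<Sum>l\<le>Suc n. of_nat (n choose l) * d ^ (Suc n - l) * p l)"
    by (simp add: sum_distrib_left Suc_diff_le mult_ac)
  also have "\<dots> = d ^ Suc n * p 0 + (\<Sum>l\<le>n. of_nat (n choose Suc l) * d ^ (n - l) * p (Suc l))"
    by (subst sum.atMost_Suc_shift) simp
  finally show ?thesis
    by (subst sum.atMost_Suc_shift) (simp add: distrib_right sum.distrib)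
qed

lemma mpow_add_diagonal:
  assumes "finite W"
    and shift: "\<And>i j. i \<in> W \<Longrightarrow> j \<in> W \<Longrightarrow> M' i j = M i j + (if i = j then d else 0)"
    and "i \<in> W"
  shows "mpow W M' n i j = (\<Sum>l\<le>n. of_nat (n choose l) * d ^ (n - l) * mpow W M l i j)"
  using \<open>i \<in> W\<close>
proof (induction n arbitrary: i)
  case 0
  then show ?case by simp
next
  case (Suc n)
  have "mpow W M' (Suc n) i j = (\<Sum>k\<in>W. M i k * mpow W M' n k j) + d * mpow W M' n i j"
    using shift[OF Suc.prems] Suc.prems assms(1)
    by (simp add: mmult_def distrib_right sum.distrib if_distrib[where f = "\<lambda>x. x * _"]
        sum.delta cong: if_cong)
  also have "(\<Sum>k\<in>W. M i k * mpow W M' n k j)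
      = (\<Sum>l\<le>n. of_nat (n choose l) * d ^ (n - l) * mpow W M (Suc l) i j)"
    by (simp add: Suc.IH mmult_def sum_distrib_left sum_distrib_right mult_ac) (rule sum.swap)
  finally show ?case
    using Suc.IH[OF Suc.prems] binomial_sum_Suc[of n d "\<lambda>l. mpow W M l i j"] by simp
qed

lemma complex_divide_fact: "z / of_nat (fact m) = z /\<^sub>R fact m" for z :: complex
  by (simp add: scaleR_conv_of_real divide_inverse mult.commute)

lemma mexp_add_diagonal:
  assumes fin: "finite W"
    and shift: "\<And>i j. i \<in> W \<Longrightarrow> j \<in> W \<Longrightarrow> M' i j = M i j + (if i = j then d else 0)"
    and i: "i \<in> W"
  shows "mexp W M' i j = exp d * mexp W M i j"
proof -
  define p where "p l = mpow W M l i j / of_nat (fact l)" for l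
  define q where "q m = d ^ m / of_nat (fact m)" for m
  have Cauchy_term: "mpow W M' n i j / of_nat (fact n) = (\<Sum>l\<le>n. p l * q (n - l))" for n
  proof -
    have "mpow W M' n i j / of_nat (fact n)
        = (\<Sum>l\<le>n. of_nat (n choose l) * d ^ (n - l) * mpow W M l i j / of_nat (fact n))"
      by (simp add: mpow_add_diagonal[OF fin shift i] sum_divide_distrib)
    also have "\<dots> = (\<Sum>l\<le>n. p l * q (n - l))"
    proof (intro sum.cong refl)
    fix l assume l: "l \<in> {..n}"
    then have "(of_nat (fact n) :: complex) = of_nat (fact l) * of_nat (fact (n - l)) * of_nat (n choose l)"
      using binomial_fact_lemma by (metis atMost_iff of_nat_mult)
    then show "of_nat (n choose l) * d ^ (n - l) * mpow W M l i j / of_nat (fact n) = p l * q (n - l)"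
      unfolding p_def q_def using l by (simp add: field_simps)
    qed
    finally show ?thesis .
  qed
  have "mexp W M' i j = (\<Sum>l. p l) * (\<Sum>m. q m)"
    unfolding mexp_def Cauchy_term
  proof (rule Cauchy_product[symmetric])
    show "summable (\<lambda>k. norm (p k))"
      unfolding p_def by (rule summable_norm_mexp_series[OF fin i])
    show "summable (\<lambda>k. norm (q k))"
      unfolding q_def complex_divide_fact by (rule summable_norm_exp)
  qed
  also have "(\<Sum>m. q m) = exp d"
    unfolding q_def complex_divide_fact exp_def ..
  finally show ?thesis
    by (simp add: p_def mexp_def mult.commute)
qed

section \<open>Intertwined evolutions\<close>

lemma evol_intertwine_gram:
  fixes N :: "'a \<Rightarrow> 'b \<Rightarrow> complex"
  assumes fin: "finite V" "finite E"
    and M: "\<And>i k. i \<in> V \<Longrightarrow> k \<in> V \<Longrightarrow> M i k = (\<Sum>g\<in>E. N i g * N k g)"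
    and L: "\<And>g f. g \<in> E \<Longrightarrow> f \<in> E \<Longrightarrow> (\<Sum>k\<in>V. N k g * N k f) = L g f + (if g = f then d else 0)"
    and i: "i \<in> V" and e: "e \<in> E"
  shows "(\<Sum>j\<in>V. evol V M t i j * N j e) = exp (- \<i> * t * d) * (\<Sum>f\<in>E. N i f * evol E L t f e)"
proof -
  define c where "c = - \<i> * t"
  define R where "R g f = c * (\<Sum>k\<in>V. N k g * N k f)" for g f
  have "(\<Sum>k\<in>V. c * M i k * N k f) = (\<Sum>g\<in>E. N i g * R g f)" if "i \<in> V" "f \<in> E" for i f
    using M[OF that(1)] unfolding R_def
    by (simp add: sum_distrib_left sum_distrib_right mult_ac) (rule sum.swap)
  then have "(\<Sum>j\<in>V. evol V M t i j * N j e) = (\<Sum>f\<in>E. N i f * mexp E R f e)"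
    unfolding evol_def c_def[symmetric] by (intro mexp_intertwine[OF fin _ i e]) simp
  also have "\<dots> = (\<Sum>f\<in>E. N i f * (exp (c * d) * evol E L t f e))"
    unfolding evol_def c_def[symmetric]
    by (intro sum.cong refl arg_cong2[where f = "(*)"] mexp_add_diagonal[OF fin(2)])
       (simp_all add: R_def L algebra_simps)
  finally show ?thesis
    by (simp add: c_def sum_distrib_left mult_ac)
qed

lemma sum_mult_basis_vec: "finite A \<Longrightarrow> a \<in> A \<Longrightarrow> (\<Sum>x\<in>A. f x * basis_vec a x) = f a"
  by (simp add: basis_vec_def if_distrib[where f = "\<lambda>y. _ * y"] cong: if_cong)

lemma injective_intertwiner_eq_iff:
  fixes N :: "'a \<Rightarrow> 'b \<Rightarrow> complex"
  assumes "finite E" "e' \<in> E"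
    and inj: "\<And>x. (\<And>i. i \<in> V \<Longrightarrow> (\<Sum>f\<in>E. N i f * x f) = 0) \<Longrightarrow> \<forall>f\<in>E. x f = 0"
  shows "(\<forall>i\<in>V. (\<Sum>f\<in>E. N i f * w f) = \<eta> * N i e') \<longleftrightarrow> (\<forall>f\<in>E. w f = \<eta> * basis_vec e' f)"
proof
  assume "\<forall>i\<in>V. (\<Sum>f\<in>E. N i f * w f) = \<eta> * N i e'"
  then have "\<forall>f\<in>E. w f - \<eta> * basis_vec e' f = 0"
    using assms(1,2) by (intro inj) (simp add: right_diff_distrib sum_subtractf mult.left_commute
        sum_distrib_left[symmetric] sum_mult_basis_vec)
  then show "\<forall>f\<in>E. w f = \<eta> * basis_vec e' f" by simp
next
  assume "\<forall>f\<in>E. w f = \<eta> * basis_vec e' f"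
  then show "\<forall>i\<in>V. (\<Sum>f\<in>E. N i f * w f) = \<eta> * N i e'"
    using assms(1,2) by (simp add: mult.left_commute sum_distrib_left[symmetric] sum_mult_basis_vec)
qed

lemma PST_iff_PST_intertwined:
  fixes N :: "'a \<Rightarrow> 'b \<Rightarrow> complex" and \<phi> :: "real \<Rightarrow> complex"
  assumes fin: "finite E" and e: "e \<in> E" "e' \<in> E"
    and intertw: "\<And>t i. i \<in> V \<Longrightarrow>
           (\<Sum>j\<in>V. evol V M t i j * N j e) = \<phi> t * (\<Sum>f\<in>E. N i f * evol E L t f e)"
    and phase: "\<And>t. cmod (\<phi> t) = 1"
    and inj: "\<And>x. (\<And>i. i \<in> V \<Longrightarrow> (\<Sum>f\<in>E. N i f * x f) = 0) \<Longrightarrow> \<forall>f\<in>E. x f = 0"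
  shows "PST V M (\<lambda>i. N i e) (\<lambda>i. N i e') \<longleftrightarrow> PST E L (basis_vec e) (basis_vec e')"
proof -
  have rescale: "(\<exists>\<eta>. cmod \<eta> = 1 \<and> (\<forall>i\<in>V. \<phi> t * S i = \<eta> * N i e'))
      \<longleftrightarrow> (\<exists>\<eta>. cmod \<eta> = 1 \<and> (\<forall>i\<in>V. S i = \<eta> * N i e'))" for t S
  proof -
    have \<phi>: "\<phi> t \<noteq> 0" using phase[of t] by auto
    show ?thesis
    proof
      assume "\<exists>\<eta>. cmod \<eta> = 1 \<and> (\<forall>i\<in>V. \<phi> t * S i = \<eta> * N i e')"
      then obtain \<eta> where "cmod \<eta> = 1" "\<forall>i\<in>V. \<phi> t * S i = \<eta> * N i e'" by blast
      then show "\<exists>\<eta>. cmod \<eta> = 1 \<and> (\<forall>i\<in>V. S i = \<eta> * N i e')"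
        using \<phi> phase[of t] by (intro exI[of _ "\<eta> / \<phi> t"]) (auto simp: norm_divide field_simps)
    next
      assume "\<exists>\<eta>. cmod \<eta> = 1 \<and> (\<forall>i\<in>V. S i = \<eta> * N i e')"
      then obtain \<eta> where "cmod \<eta> = 1" "\<forall>i\<in>V. S i = \<eta> * N i e'" by blast
      then show "\<exists>\<eta>. cmod \<eta> = 1 \<and> (\<forall>i\<in>V. \<phi> t * S i = \<eta> * N i e')"
        using phase[of t] by (intro exI[of _ "\<phi> t * \<eta>"]) (auto simp: norm_mult)
    qed
  qed
  have "PST V M (\<lambda>i. N i e) (\<lambda>i. N i e')
      \<longleftrightarrow> (\<exists>t>0. \<exists>\<eta>. cmod \<eta> = 1 \<and> (\<forall>i\<in>V. (\<Sum>f\<in>E. N i f * evol E L t f e) = \<eta> * N i e'))"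
    unfolding PST_def by (simp add: intertw rescale cong: ball_cong)
  also have "\<dots> \<longleftrightarrow> PST E L (basis_vec e) (basis_vec e')"
    unfolding PST_def sum_mult_basis_vec[OF fin e(1)]
    by (simp add: injective_intertwiner_eq_iff[where V = V and N = N, OF fin e(2) inj])
  finally show ?thesis .
qed

section \<open>The incidence matrix\<close>

definition incidence :: "'v \<Rightarrow> 'v set \<Rightarrow> complex" where
  "incidence v f = of_bool (v \<in> f)"

lemma simple_graph_finite_edges: "simple_graph V E \<Longrightarrow> finite E"
  unfolding simple_graph_def by (meson Pow_iff finite_Pow_iff finite_subset subsetI)

lemma card_two_mem_iff: "card g = 2 \<Longrightarrow> i \<noteq> k \<Longrightarrow> i \<in> g \<and> k \<in> g \<longleftrightarrow> g = {i, k}"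
  by (auto simp: card_2_iff)

lemma signless_laplacian_eq_incidence_gram:
  assumes "simple_graph V E"
  shows "signless_laplacian E i k = (\<Sum>g\<in>E. incidence i g * incidence k g)"
proof -
  have "(\<Sum>g\<in>E. incidence i g * incidence k g) = of_nat (card {g\<in>E. i \<in> g \<and> k \<in> g})"
    using simple_graph_finite_edges[OF assms]
    by (simp add: incidence_def Int_def flip: of_bool_conj)
  also have "\<dots> = signless_laplacian E i k"
  proof (cases "i = k")
    case True
    then show ?thesis by (simp add: signless_laplacian_def degree_def)
  next
    case False
    then have "{g\<in>E. i \<in> g \<and> k \<in> g} = (if {i, k} \<in> E then {{i, k}} else {})"
      using assms card_two_mem_iff[OF _ False] unfolding simple_graph_def by auto
    then show ?thesis
      using False by (simp add: signless_laplacian_def)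
  qed
  finally show ?thesis ..
qed

lemma incidence_gram_eq_line_graph_adj:
  assumes "simple_graph V E" "g \<in> E" "f \<in> E"
  shows "(\<Sum>k\<in>V. incidence k g * incidence k f) = line_graph_adj E g f + (if g = f then 2 else 0)"
proof -
  have g: "card g = 2" "g \<subseteq> V" and f: "card f = 2" and "finite V"
    using assms unfolding simple_graph_def by auto
  then have "(\<Sum>k\<in>V. incidence k g * incidence k f) = of_nat (card (V \<inter> (g \<inter> f)))"
    by (simp add: incidence_def Int_def flip: of_bool_conj)
  also have "V \<inter> (g \<inter> f) = g \<inter> f"
    using g(2) by blast
  also have "card (g \<inter> f) = (if g = f then 2 else if g \<inter> f = {} then 0 else 1)"
  proof -
    have "card (g \<inter> f) \<le> 1" if "g \<noteq> f"
    proof -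
      have "x = y" if "x \<in> g \<inter> f" "y \<in> g \<inter> f" for x y
        using that \<open>g \<noteq> f\<close> card_two_mem_iff[OF g(1), of x y] card_two_mem_iff[OF f, of x y] by auto
      then show ?thesis
        using g(1) by (metis card.infinite card_le_Suc0_iff_eq finite_Int One_nat_def zero_neq_numeral)
    qed
    moreover have "finite (g \<inter> f)"
      using g(1) card.infinite by fastforce
    ultimately show ?thesis
      using g(1) by (auto simp: le_Suc_eq)
  qed
  finally show ?thesis
    by (simp add: line_graph_adj_def)
qed

lemma basis_vec_add_eq_incidence:
  assumes "a \<noteq> b"
  shows "basis_vec a i + basis_vec b i = incidence i {a, b}"
  using assms by (simp add: basis_vec_def incidence_def)

section \<open>The kernel of the incidence matrix\<close>

definition is_path :: "'v set set \<Rightarrow> 'v list \<Rightarrow> bool" where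
  "is_path H ps \<longleftrightarrow> distinct ps \<and> (\<forall>i. Suc i < length ps \<longrightarrow> {ps ! i, ps ! Suc i} \<in> H)"

definition no_pendant_edges :: "'v set set \<Rightarrow> bool" where
  "no_pendant_edges H \<longleftrightarrow> (\<forall>f\<in>H. \<forall>v\<in>f. \<exists>f'\<in>H. f' \<noteq> f \<and> v \<in> f')"

lemma is_path_rev:
  assumes "is_path H ps"
  shows "is_path H (rev ps)"
  unfolding is_path_def
proof (intro conjI allI impI)
  show "distinct (rev ps)"
    using assms by (simp add: is_path_def)
  fix i assume i: "Suc i < length (rev ps)"
  then have "{ps ! (length ps - 2 - i), ps ! Suc (length ps - 2 - i)} \<in> H"
    using assms unfolding is_path_def by auto
  moreover have "Suc (length ps - 2 - i) = length ps - 1 - i"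
    using i by simp
  ultimately show "{rev ps ! i, rev ps ! Suc i} \<in> H"
    using i by (simp add: rev_nth insert_commute numeral_2_eq_2)
qed

lemma is_path_snoc:
  assumes "is_path H ps" "ps \<noteq> []" "y \<notin> set ps" "{last ps, y} \<in> H"
  shows "is_path H (ps @ [y])"
  using assms unfolding is_path_def
  by (auto simp: nth_append last_conv_nth less_Suc_eq not_less_eq)
     (metis diff_Suc_Suc minus_nat.diff_0)

lemma set_path_subset_Union:
  assumes "is_path H ps" "2 \<le> length ps"
  shows "set ps \<subseteq> \<Union>H"
proof
  fix v assume "v \<in> set ps"
  then obtain i where i: "i < length ps" "ps ! i = v"
    by (auto simp: in_set_conv_nth)
  show "v \<in> \<Union>H"
  proof (cases "Suc i < length ps")
    case True
    then show ?thesis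
      using assms(1) i unfolding is_path_def by blast
  next
    case False
    then have "Suc (i - 1) < length ps" "Suc (i - 1) = i"
      using i assms(2) by auto
    then show ?thesis
      using assms(1) i unfolding is_path_def by (metis Union_iff insertCI)
  qed
qed

lemma maximal_path_closes_cycle:
  assumes sg: "simple_graph V E" and HE: "H \<subseteq> E" and deg: "no_pendant_edges H"
    and path: "is_path H ps" and len: "2 \<le> length ps"
    and maximal: "\<And>y. y \<notin> set ps \<Longrightarrow> \<not> is_path H (ps @ [y])"
  shows "\<exists>j. is_cycle E (drop j ps)"
proof -
  define m where "m = length ps - 1"
  have m: "length ps = Suc m" "1 \<le> m"
    using len unfolding m_def by auto
  have last: "last ps = ps ! m"
    using m by (cases ps) (auto simp: last_conv_nth)
  have "Suc (m - 1) < length ps" "Suc (m - 1) = m"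
    using m by auto
  then have "{ps ! (m - 1), ps ! m} \<in> H"
    using path unfolding is_path_def by metis
  then obtain f where f: "f \<in> H" "f \<noteq> {ps ! (m - 1), ps ! m}" "ps ! m \<in> f"
    using deg unfolding no_pendant_edges_def by blast
  moreover have "card f = 2"
    using HE sg f(1) unfolding simple_graph_def by auto
  ultimately obtain y where y: "f = {ps ! m, y}" "y \<noteq> ps ! m"
    by (fastforce simp: card_2_iff)
  have "y \<in> set ps"
  proof (rule ccontr)
    assume y_new: "y \<notin> set ps"
    then have "is_path H (ps @ [y])"
      by (intro is_path_snoc[OF path]) (use len f(1) y(1) last in auto)
    with maximal y_new show False by blast
  qed
  then obtain j where j: "j < length ps" "ps ! j = y"
    by (auto simp: in_set_conv_nth)
  have "j \<noteq> m" "j \<noteq> m - 1"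
    using j y f(2) by (auto simp: insert_commute)
  then have jm: "j + 2 \<le> m"
    using j m by linarith
  have "is_cycle E (drop j ps)"
    unfolding is_cycle_def
  proof (intro conjI allI impI)
    show "3 \<le> length (drop j ps)" "distinct (drop j ps)"
      using jm m path unfolding is_path_def by auto
    fix i assume i: "i < length (drop j ps)"
    show "{drop j ps ! i, drop j ps ! ((i + 1) mod length (drop j ps))} \<in> E"
    proof (cases "Suc i < length (drop j ps)")
      case True
      then show ?thesis
        using path HE unfolding is_path_def by auto
    next
      case False
      then have "Suc i = length (drop j ps)"
        using i by simp
      then have "i = m - j" "(i + 1) mod length (drop j ps) = 0"
        using m by auto
      then show ?thesis
        using f(1) y(1) j jm m HE by (auto simp: insert_commute)
    qed
  qed
  then show ?thesis ..
qed

lemma obtain_maximal_path_through_edge: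
  assumes sg: "simple_graph V E" and HE: "H \<subseteq> E" and g: "g \<in> H"
  obtains ps s where "is_path H ps" "Suc s < length ps" "{ps ! s, ps ! Suc s} = g"
    "\<And>y. y \<notin> set ps \<Longrightarrow> \<not> is_path H (ps @ [y])"
    "\<And>y. y \<notin> set ps \<Longrightarrow> \<not> is_path H (y # ps)"
proof -
  define P where "P ps \<longleftrightarrow> is_path H ps \<and> (\<exists>s. Suc s < length ps \<and> {ps ! s, ps ! Suc s} = g)" for ps
  obtain u w where uw: "g = {u, w}" "u \<noteq> w"
    using sg HE g unfolding simple_graph_def by (meson card_2_iff subsetD)
  have "P [u, w]"
    using uw g unfolding P_def is_path_def by (auto simp: less_Suc_eq)
  moreover have "length ps < Suc (card V)" if "P ps" for ps
  proof -
    have "\<Union>H \<subseteq> V"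
      using sg HE unfolding simple_graph_def by blast
    then have "set ps \<subseteq> V"
      using set_path_subset_Union[of H ps] that unfolding P_def by force
    then have "card (set ps) \<le> card V"
      using sg unfolding simple_graph_def by (simp add: card_mono)
    then show ?thesis
      using that unfolding P_def is_path_def by (simp add: distinct_card)
  qed
  ultimately obtain ps where ps: "P ps" and longest: "\<And>ys. P ys \<Longrightarrow> length ys \<le> length ps"
    using ex_has_greatest_nat[of P "[u, w]" length "Suc (card V)"] by blast
  then obtain s where s: "Suc s < length ps" "{ps ! s, ps ! Suc s} = g"
    unfolding P_def by blast
  show thesis
  proof (rule that[OF _ s])
    show "is_path H ps"
      using ps unfolding P_def by blast
    show "\<not> is_path H (ps @ [y])" for y
    proof
      assume "is_path H (ps @ [y])"
      then have "P (ps @ [y])"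
        using s unfolding P_def by (intro conjI exI[of _ s]) (auto simp: nth_append)
      then show False
        using longest by fastforce
    qed
    show "\<not> is_path H (y # ps)" for y
    proof
      assume "is_path H (y # ps)"
      then have "P (y # ps)"
        using s unfolding P_def by (intro conjI exI[of _ "Suc s"]) auto
      then show False
        using longest by fastforce
    qed
  qed
qed

lemma no_pendant_edges_edge_between_cycles:
  assumes sg: "simple_graph V E" and HE: "H \<subseteq> E" and deg: "no_pendant_edges H" and g: "g \<in> H"
  obtains ps s j k where "is_path H ps" "Suc s < length ps" "{ps ! s, ps ! Suc s} = g"
    "is_cycle E (drop j ps)" "is_cycle E (drop k (rev ps))"
proof -
  obtain ps s where ps: "is_path H ps" "Suc s < length ps" "{ps ! s, ps ! Suc s} = g"
    and right: "\<And>y. y \<notin> set ps \<Longrightarrow> \<not> is_path H (ps @ [y])"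
    and left: "\<And>y. y \<notin> set ps \<Longrightarrow> \<not> is_path H (y # ps)"
    using obtain_maximal_path_through_edge[OF sg HE g] by blast
  have left': "\<not> is_path H (rev ps @ [y])" if "y \<notin> set (rev ps)" for y
    using left[of y] that is_path_rev[of H "rev ps @ [y]"] by auto
  have len: "2 \<le> length ps"
    using ps(2) by simp
  obtain j where "is_cycle E (drop j ps)"
    using maximal_path_closes_cycle[OF sg HE deg ps(1) len right] by blast
  moreover obtain k where "is_cycle E (drop k (rev ps))"
    using maximal_path_closes_cycle[OF sg HE deg is_path_rev[OF ps(1)] _ left'] len by auto
  ultimately show thesis
    using that[OF ps] by blast
qed

lemma acyclic_no_pendant_edges_empty:
  assumes "simple_graph V E" "H \<subseteq> E" "no_pendant_edges H" "\<nexists>vs. is_cycle E vs"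
  shows "H = {}"
  using no_pendant_edges_edge_between_cycles[OF assms(1-3)] assms(4) by (metis equals0I)

lemma Union_cycle_edges: "vs \<noteq> [] \<Longrightarrow> \<Union>(cycle_edges vs) = set vs"
proof (intro equalityI subsetI)
  fix v assume "v \<in> \<Union>(cycle_edges vs)" "vs \<noteq> []"
  then show "v \<in> set vs"
    unfolding cycle_edges_def by (auto intro: nth_mem)
next
  fix v assume "v \<in> set vs"
  then obtain i where "i < length vs" "vs ! i = v"
    by (auto simp: in_set_conv_nth)
  then show "v \<in> \<Union>(cycle_edges vs)"
    unfolding cycle_edges_def by blast
qed

lemma no_pendant_edges_subset_unique_cycle:
  assumes sg: "simple_graph V E" and HE: "H \<subseteq> E" and deg: "no_pendant_edges H"
    and unique: "\<And>vs ws. is_cycle E vs \<Longrightarrow> is_cycle E ws \<Longrightarrow> cycle_edges vs = cycle_edges ws"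
    and cyc: "is_cycle E vs"
  shows "H \<subseteq> cycle_edges vs"
proof
  fix g assume "g \<in> H"
  then obtain ps s j k where ps: "is_path H ps" "Suc s < length ps" "{ps ! s, ps ! Suc s} = g"
    and j: "is_cycle E (drop j ps)" and k: "is_cycle E (drop k (rev ps))"
    using no_pendant_edges_edge_between_cycles[OF sg HE deg] by blast
  have nonempty: "drop j ps \<noteq> []" "drop k (rev ps) \<noteq> []"
    using j k unfolding is_cycle_def by auto
  show "g \<in> cycle_edges vs"
  proof (cases "j = 0")
    case True
    have "g \<in> cycle_edges ps"
      using ps(2,3) unfolding cycle_edges_def by force
    then show ?thesis
      using unique[OF j cyc] True by simp
  next
    case False
    text \<open>Both end cycles have the same edges, hence the same vertices; yet the first vertex of the
      path lies on the cycle closed at the far end and not on the one closed at this end.\<close>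
    have "ps ! 0 = last (drop k (rev ps))"
      using nonempty ps(2) by (cases ps) (auto simp: last_rev)
    then have "ps ! 0 \<in> \<Union>(cycle_edges (drop k (rev ps)))"
      using Union_cycle_edges[OF nonempty(2)] last_in_set[OF nonempty(2)] by simp
    then have "ps ! 0 \<in> set (drop j ps)"
      using unique[OF j k] Union_cycle_edges[OF nonempty(1)] by blast
    moreover have "ps ! 0 \<in> set (take j ps)"
    proof -
      have "take j ps ! 0 = ps ! 0" "0 < length (take j ps)"
        using False ps(2) by auto
      then show ?thesis
        by (metis nth_mem)
    qed
    ultimately show ?thesis
      using ps(1) set_take_disj_set_drop_if_distinct[of ps j j] unfolding is_path_def by blast
  qed
qed

definition cycle_edge :: "'v list \<Rightarrow> nat \<Rightarrow> 'v set" where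
  "cycle_edge vs i = {vs ! i, vs ! (Suc i mod length vs)}"

lemma cycle_edges_eq_image: "cycle_edges vs = cycle_edge vs ` {..<length vs}"
  unfolding cycle_edges_def cycle_edge_def by auto

lemma mem_cycle_edge_iff:
  assumes "is_cycle E vs" "i < length vs" "l < length vs"
  shows "vs ! i \<in> cycle_edge vs l \<longleftrightarrow> i = l \<or> i = Suc l mod length vs"
proof -
  have "Suc l mod length vs < length vs"
    by (rule mod_less_divisor) (use assms(3) in linarith)
  then show ?thesis
    using assms unfolding is_cycle_def cycle_edge_def by (auto simp: nth_eq_iff_index_eq)
qed

lemma inj_on_cycle_edge:
  assumes cyc: "is_cycle E vs"
  shows "inj_on (cycle_edge vs) {..<length vs}"
proof
  fix l l' assume l: "l \<in> {..<length vs}" and l': "l' \<in> {..<length vs}"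
    and eq: "cycle_edge vs l = cycle_edge vs l'"
  have "l = l' \<or> l = Suc l' mod length vs" "l' = l \<or> l' = Suc l mod length vs"
    using mem_cycle_edge_iff[OF cyc] l l' eq unfolding cycle_edge_def
    by (metis insertI1 lessThan_iff)+
  moreover have "length vs \<ge> 3"
    using cyc unfolding is_cycle_def by simp
  ultimately show "l = l'"
    using l l' by (auto simp: mod_Suc split: if_splits)
qed

lemma card_cycle_edges: "is_cycle E vs \<Longrightarrow> card (cycle_edges vs) = length vs"
  by (simp add: cycle_edges_eq_image card_image inj_on_cycle_edge)

lemma cycle_edges_at_vertex:
  assumes cyc: "is_cycle E vs" and l: "l < length vs"
  shows "{f \<in> cycle_edges vs. vs ! (Suc l mod length vs) \<in> f}
           = {cycle_edge vs l, cycle_edge vs (Suc l mod length vs)}"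
    and "cycle_edge vs l \<noteq> cycle_edge vs (Suc l mod length vs)"
proof -
  have n: "length vs \<ge> 3"
    using cyc unfolding is_cycle_def by simp
  have "Suc l mod length vs < length vs"
    by (rule mod_less_divisor) (use l in linarith)
  then have "{l' \<in> {..<length vs}. vs ! (Suc l mod length vs) \<in> cycle_edge vs l'}
      = {l, Suc l mod length vs}"
    using mem_cycle_edge_iff[OF cyc] l n by (auto simp: mod_Suc split: if_splits)
  moreover have "{f \<in> cycle_edge vs ` A. v \<in> f} = cycle_edge vs ` {l' \<in> A. v \<in> cycle_edge vs l'}"
    for v and A :: "nat set"
    by blast
  ultimately show "{f \<in> cycle_edges vs. vs ! (Suc l mod length vs) \<in> f}
           = {cycle_edge vs l, cycle_edge vs (Suc l mod length vs)}"
    unfolding cycle_edges_eq_image by simp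
  show "cycle_edge vs l \<noteq> cycle_edge vs (Suc l mod length vs)"
  proof
    assume "cycle_edge vs l = cycle_edge vs (Suc l mod length vs)"
    then have "l = Suc l mod length vs"
      using inj_on_cycle_edge[OF cyc] l \<open>Suc l mod length vs < length vs\<close>
      by (auto dest: inj_onD)
    then show False
      using l n by (auto simp: mod_Suc split: if_splits)
  qed
qed

lemma cycle_edges_subset: "is_cycle E vs \<Longrightarrow> cycle_edges vs \<subseteq> E"
  unfolding is_cycle_def cycle_edges_def by auto

lemma sum_incidence_mult: "finite E \<Longrightarrow> (\<Sum>f\<in>E. incidence v f * x f) = (\<Sum>f\<in>{f\<in>E. v \<in> f}. x f)"
  by (simp add: incidence_def sum.inter_filter[symmetric] Int_def)

lemma odd_cycle_weights_zero:
  fixes x :: "'v set \<Rightarrow> complex"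
  assumes cyc: "is_cycle E vs" and odd: "odd (length vs)" and fin: "finite E"
    and balanced: "\<And>v. v \<in> set vs \<Longrightarrow> (\<Sum>f\<in>E. incidence v f * x f) = 0"
    and supp: "\<And>f. f \<in> E \<Longrightarrow> x f \<noteq> 0 \<Longrightarrow> f \<in> cycle_edges vs"
    and f: "f \<in> cycle_edges vs"
  shows "x f = 0"
proof -
  define n where "n = length vs"
  have n: "n \<ge> 3"
    using cyc unfolding is_cycle_def n_def by simp
  have consecutive: "x (cycle_edge vs l) + x (cycle_edge vs (Suc l mod n)) = 0" if l: "l < n" for l
  proof -
    let ?v = "vs ! (Suc l mod n)"
    have "Suc l mod n < n"
      using n by simp
    then have "?v \<in> set vs"
      unfolding n_def by simp
    then have "0 = (\<Sum>f\<in>{f\<in>E. ?v \<in> f}. x f)"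
      using balanced sum_incidence_mult[OF fin] by metis
    also have "\<dots> = (\<Sum>f\<in>{f\<in>cycle_edges vs. ?v \<in> f}. x f)"
      using fin supp cycle_edges_subset[OF cyc] by (intro sum.mono_neutral_right) auto
    also have "\<dots> = x (cycle_edge vs l) + x (cycle_edge vs (Suc l mod n))"
      using cycle_edges_at_vertex[OF cyc] l unfolding n_def by simp
    finally show ?thesis ..
  qed
  have alternating: "x (cycle_edge vs i) = (-1) ^ i * x (cycle_edge vs 0)" if "i < n" for i
    using that
  proof (induction i)
    case 0
    then show ?case by simp
  next
    case (Suc i)
    then show ?case
      using consecutive[of i] by (simp add: add_eq_0_iff)
  qed
  text \<open>Going once around the cycle flips the sign an odd number of times.\<close>
  have "x (cycle_edge vs (n - 1)) + x (cycle_edge vs 0) = 0"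
    using consecutive[of "n - 1"] n by simp
  then have "x (cycle_edge vs 0) = 0"
    using alternating[of "n - 1"] odd n unfolding n_def by simp
  then show ?thesis
    using f alternating unfolding cycle_edges_eq_image n_def by auto
qed

lemma balanced_support_no_pendant_edges:
  assumes sg: "simple_graph V E"
    and balanced: "\<And>v. v \<in> V \<Longrightarrow> (\<Sum>f\<in>E. incidence v f * x f) = 0"
  shows "no_pendant_edges {f\<in>E. x f \<noteq> 0}"
  unfolding no_pendant_edges_def
proof (intro ballI)
  fix f v assume f: "f \<in> {f\<in>E. x f \<noteq> 0}" and v: "v \<in> f"
  have fin: "finite E"
    using sg by (rule simple_graph_finite_edges)
  have "v \<in> V"
    using sg f v unfolding simple_graph_def by blast
  then have "0 = (\<Sum>f'\<in>{f\<in>E. v \<in> f}. x f')"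
    using balanced fin by (simp add: sum_incidence_mult)
  also have "\<dots> = x f + (\<Sum>f'\<in>{f\<in>E. v \<in> f} - {f}. x f')"
    using fin f v by (intro sum.remove) auto
  finally have "(\<Sum>f'\<in>{f\<in>E. v \<in> f} - {f}. x f') \<noteq> 0"
    using f by auto
  then obtain f' where "f' \<in> {f\<in>E. v \<in> f} - {f}" "x f' \<noteq> 0"
    by (meson sum.neutral)
  then show "\<exists>f'\<in>{f\<in>E. x f \<noteq> 0}. f' \<noteq> f \<and> v \<in> f'"
    by auto
qed

lemma incidence_kernel_trivial:
  fixes x :: "'v set \<Rightarrow> complex"
  assumes sg: "simple_graph V E" and shape: "is_tree V E \<or> odd_unicyclic V E"
    and balanced: "\<And>v. v \<in> V \<Longrightarrow> (\<Sum>f\<in>E. incidence v f * x f) = 0"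
    and f: "f \<in> E"
  shows "x f = 0"
proof -
  let ?H = "{f\<in>E. x f \<noteq> 0}"
  have deg: "no_pendant_edges ?H"
    using sg balanced by (rule balanced_support_no_pendant_edges)
  show ?thesis
  proof (cases "is_tree V E")
    case True
    then have "?H = {}"
      using acyclic_no_pendant_edges_empty[OF sg _ deg] unfolding is_tree_def by blast
    then show ?thesis
      using f by blast
  next
    case False
    then obtain vs where cyc: "is_cycle E vs" and odd: "odd (length vs)"
      and unique: "\<And>vs ws. is_cycle E vs \<Longrightarrow> is_cycle E ws \<Longrightarrow> cycle_edges vs = cycle_edges ws"
    proof -
      obtain C where C: "\<exists>vs. is_cycle E vs \<and> cycle_edges vs = C"
        "\<forall>vs. is_cycle E vs \<longrightarrow> cycle_edges vs = C" "odd (card C)"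
        using shape False unfolding odd_unicyclic_def by blast
      then obtain vs where vs: "is_cycle E vs" "cycle_edges vs = C"
        by blast
      show thesis
      proof (rule that[OF vs(1)])
        show "odd (length vs)"
          using vs C(3) card_cycle_edges by metis
        show "cycle_edges vs' = cycle_edges ws" if "is_cycle E vs'" "is_cycle E ws" for vs' ws
          using that C(2) by simp
      qed
    qed
    have H: "?H \<subseteq> cycle_edges vs"
      using no_pendant_edges_subset_unique_cycle[OF sg _ deg unique cyc] by blast
    have "vs \<noteq> []"
      using cyc unfolding is_cycle_def by auto
    then have "set vs \<subseteq> V"
      using sg cycle_edges_subset[OF cyc] Union_cycle_edges[of vs] unfolding simple_graph_def by blast
    have "x g = 0" if "g \<in> cycle_edges vs" for g
    proof (rule odd_cycle_weights_zero[OF cyc odd simple_graph_finite_edges[OF sg] _ _ that])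
      show "(\<Sum>f\<in>E. incidence v f * x f) = 0" if "v \<in> set vs" for v
        using that \<open>set vs \<subseteq> V\<close> balanced by blast
      show "f \<in> cycle_edges vs" if "f \<in> E" "x f \<noteq> 0" for f
        using that H by blast
    qed
    then show ?thesis
      using H f by blast
  qed
qed

theorem mainTheorem11:
  fixes V :: "'v set" and E :: "'v set set" and a b \<alpha> \<beta> :: 'v
  assumes "simple_graph V E"
    and "is_tree V E \<or> odd_unicyclic V E"
    and "{a, b} \<in> E" and "{\<alpha>, \<beta>} \<in> E"
  shows "PST V (signless_laplacian E)
            (\<lambda>i. basis_vec a i + basis_vec b i) (\<lambda>i. basis_vec \<alpha> i + basis_vec \<beta> i)
         \<longleftrightarrow> PST E (line_graph_adj E) (basis_vec {a, b}) (basis_vec {\<alpha>, \<beta>})"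
proof -
  note sg = assms(1)
  have fin: "finite V" "finite E"
    using sg simple_graph_finite_edges unfolding simple_graph_def by auto
  have "a \<noteq> b" "\<alpha> \<noteq> \<beta>"
    using sg assms(3,4) unfolding simple_graph_def by fastforce+
  then have states: "(\<lambda>i. basis_vec a i + basis_vec b i) = (\<lambda>i. incidence i {a, b})"
      "(\<lambda>i. basis_vec \<alpha> i + basis_vec \<beta> i) = (\<lambda>i. incidence i {\<alpha>, \<beta>})"
    by (simp_all add: basis_vec_add_eq_incidence)
  show ?thesis
    unfolding states
  proof (rule PST_iff_PST_intertwined[OF fin(2) assms(3,4)])
    show "(\<Sum>j\<in>V. evol V (signless_laplacian E) t i j * incidence j {a, b})
        = exp (- \<i> * t * 2) * (\<Sum>f\<in>E. incidence i f * evol E (line_graph_adj E) t f {a, b})"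
      if "i \<in> V" for t i
      using signless_laplacian_eq_incidence_gram[OF sg] incidence_gram_eq_line_graph_adj[OF sg]
      by (intro evol_intertwine_gram[OF fin _ _ that assms(3)])
    show "cmod (exp (- \<i> * complex_of_real t * 2)) = 1" for t
      by simp
    show "\<forall>f\<in>E. x f = 0" if "\<And>i. i \<in> V \<Longrightarrow> (\<Sum>f\<in>E. incidence i f * x f) = 0" for x
      using incidence_kernel_trivial[OF sg assms(2)] that by blast
  qed
qed

end
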